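(* Let $k\ge 2$ and $m\ge 3$ be integers. Then $$\frac{(m-1)^k}{2}+\frac{m-1}{2}+1\;\le\; M_k(m)\;\le\;(m-1)^k+1.$$ More generally, for all positive integers $m_1,\ldots,m_k$, $$M(m_1,\ldots,m_k)\le \prod_{i=1}^{k}(m_i-1)+1.$$
   Context: All graphs are finite and simple. A path $v_1,v_2,\ldots,v_r$ in a graph $G$ is degree-monotone if $\deg_G(v_1)\le \deg_G(v_2)\le\cdots\le\deg_G(v_r)$, where $\deg_G$ denotes degree in $G$; its order is its number of vertices $r$. Let $mp(G)$ be the maximum order of a degree-monotone path in $G$. For a $k$-edge-coloring of $K_n$ with colors $1,\ldots,k$, let $G_j$ be the spanning subgraph of $K_n$ whose edges are those colored $j$ (degrees are taken in $G_j$). $M(m_1,\ldots,m_k)$ is the minimum integer $M$ such that for every $n\ge M$ and every $k$-edge-coloring of $K_n$ there is some $j\in\{1,\ldots,k\}$ with $mp(G_j)\ge m_j$. $M_k(m)$ denotes $M(m,m,\ldots,m)$ ($k$ entries). *)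

theory Defs
  imports Complex_Main
begin

text \<open>Vertices of K_n are 0..<n. A k-edge-coloring is a symmetric c with c u v < k
for distinct u v < n (colors 0..<k stand for the paper's colors 1..k).
The color-j graph G_j has edge uv iff c u v = j.\<close>

definition is_coloring :: "nat \<Rightarrow> nat \<Rightarrow> (nat \<Rightarrow> nat \<Rightarrow> nat) \<Rightarrow> bool" where
  "is_coloring n k c = (\<forall>u<n. \<forall>v<n. u \<noteq> v \<longrightarrow> c u v < k \<and> c u v = c v u)"

definition cdeg :: "nat \<Rightarrow> (nat \<Rightarrow> nat \<Rightarrow> nat) \<Rightarrow> nat \<Rightarrow> nat \<Rightarrow> nat" where
  "cdeg n c j v = card {u. u < n \<and> u \<noteq> v \<and> c v u = j}"

definition dm_path :: "nat \<Rightarrow> (nat \<Rightarrow> nat \<Rightarrow> nat) \<Rightarrow> nat \<Rightarrow> nat list \<Rightarrow> bool" where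
  "dm_path n c j p = (distinct p \<and> set p \<subseteq> {..<n} \<and>
     (\<forall>i. Suc i < length p \<longrightarrow> c (p ! i) (p ! Suc i) = j \<and>
          cdeg n c j (p ! i) \<le> cdeg n c j (p ! Suc i)))"

definition mp :: "nat \<Rightarrow> (nat \<Rightarrow> nat \<Rightarrow> nat) \<Rightarrow> nat \<Rightarrow> nat" where
  "mp n c j = Max (length ` {p. dm_path n c j p})"

definition good :: "nat list \<Rightarrow> nat \<Rightarrow> bool" where
  "good ms M = (\<forall>n\<ge>M. \<forall>c. is_coloring n (length ms) c \<longrightarrow>
                  (\<exists>j<length ms. mp n c j \<ge> ms ! j))"

definition Mnum :: "nat list \<Rightarrow> nat" where
  "Mnum ms = (LEAST M. good ms M)"

definition Mk :: "nat \<Rightarrow> nat \<Rightarrow> nat" where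
  "Mk k m = Mnum (replicate k m)"

end

theory Submission
  imports Defs "HOL-Library.FuncSet"
begin

text \<open>
Upper bound: fix a color j and order the vertices by (degree in G_j, index). Label each vertex v
by the tuple of the orders L_j(v) of the longest G_j-paths starting at v that increase in this order.
Such paths are degree-monotone, so if no G_j contains a degree-monotone path of order m_j then
L_j(v) \<in> {1..m_j - 1}; and if uv has color j then L_j(u) \<noteq> L_j(v), since the path of one of the
two can be prolonged by the other. Hence the labelling is injective and n \<le> \<Prod>(m_j - 1).

Lower bound: with a = m - 1, every K_n with 2n \<le> a^k + a has a k-coloring without degree-monotone
paths of order a + 1. For the induction step split n into at most a distinct parts of size at most
(a^(k-1) + a)/2, color inside the parts recursively and all edges between parts with the new color.
In this complete multipartite graph a vertex has degree n minus the size of its part, so a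
degree-monotone path in it visits parts of strictly decreasing sizes.
\<close>

lemma sorted_wrt_irrefl_imp_distinct:
  "sorted_wrt P xs \<Longrightarrow> (\<And>x. \<not> P x x) \<Longrightarrow> distinct xs"
  by (induction xs) auto

lemma dm_path_length_le: "dm_path n c j p \<Longrightarrow> length p \<le> n"
  unfolding dm_path_def by (metis card_lessThan card_mono distinct_card finite_lessThan)

lemma finite_dm_path_lengths: "finite (length ` {p. dm_path n c j p})"
  by (rule finite_subset[of _ "{..n}"]) (auto dest: dm_path_length_le)

lemma dm_path_nth_less: "dm_path n c j p \<Longrightarrow> i < length p \<Longrightarrow> p ! i < n"
  unfolding dm_path_def using nth_mem by blast

lemma dm_path_length_le_mp: "dm_path n c j p \<Longrightarrow> length p \<le> mp n c j"
  unfolding mp_def using finite_dm_path_lengths by (auto intro: Max_ge)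

lemma mp_leI:
  assumes "\<And>p. dm_path n c j p \<Longrightarrow> length p \<le> a"
  shows "mp n c j \<le> a"
proof -
  have "dm_path n c j []" unfolding dm_path_def by simp
  then show ?thesis
    unfolding mp_def using assms by (intro Max.boundedI) (auto simp: finite_dm_path_lengths)
qed

section \<open>The upper bound\<close>

definition deg_less :: "nat \<Rightarrow> (nat \<Rightarrow> nat \<Rightarrow> nat) \<Rightarrow> nat \<Rightarrow> nat \<Rightarrow> nat \<Rightarrow> bool" where
  "deg_less n c j u v \<longleftrightarrow>
     cdeg n c j u < cdeg n c j v \<or> (cdeg n c j u = cdeg n c j v \<and> u < v)"

definition inc_path :: "nat \<Rightarrow> (nat \<Rightarrow> nat \<Rightarrow> nat) \<Rightarrow> nat \<Rightarrow> nat list \<Rightarrow> bool" where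
  "inc_path n c j p \<longleftrightarrow> set p \<subseteq> {..<n} \<and>
     (\<forall>i. Suc i < length p \<longrightarrow> c (p ! i) (p ! Suc i) = j \<and> deg_less n c j (p ! i) (p ! Suc i))"

definition inc_paths_from :: "nat \<Rightarrow> (nat \<Rightarrow> nat \<Rightarrow> nat) \<Rightarrow> nat \<Rightarrow> nat \<Rightarrow> nat list set" where
  "inc_paths_from n c j v = {p. inc_path n c j p \<and> p \<noteq> [] \<and> hd p = v}"

definition longest_inc :: "nat \<Rightarrow> (nat \<Rightarrow> nat \<Rightarrow> nat) \<Rightarrow> nat \<Rightarrow> nat \<Rightarrow> nat" where
  "longest_inc n c j v = Max (length ` inc_paths_from n c j v)"

lemma inc_path_imp_dm_path:
  assumes "inc_path n c j p"
  shows "dm_path n c j p"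
proof -
  have "transp (deg_less n c j)" unfolding transp_def deg_less_def by auto
  then have "sorted_wrt (deg_less n c j) p"
    using assms unfolding inc_path_def by (simp add: sorted_wrt_iff_nth_Suc_transp)
  then have "distinct p" by (rule sorted_wrt_irrefl_imp_distinct) (simp add: deg_less_def)
  then show ?thesis using assms unfolding inc_path_def dm_path_def deg_less_def by auto
qed

lemma inc_path_Cons:
  assumes "inc_path n c j p" "u < n" "c u (hd p) = j" "deg_less n c j u (hd p)"
  shows "inc_path n c j (u # p)"
  using assms unfolding inc_path_def by (auto simp: nth_Cons hd_conv_nth split: nat.split)

lemma singleton_in_inc_paths_from: "v < n \<Longrightarrow> [v] \<in> inc_paths_from n c j v"
  unfolding inc_paths_from_def inc_path_def by simp

lemma finite_inc_path_lengths: "finite (length ` inc_paths_from n c j v)"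
  by (rule finite_subset[of _ "{..n}"])
    (auto simp: inc_paths_from_def dest: dm_path_length_le inc_path_imp_dm_path)

lemma length_le_longest_inc: "p \<in> inc_paths_from n c j v \<Longrightarrow> length p \<le> longest_inc n c j v"
  unfolding longest_inc_def using finite_inc_path_lengths by (auto intro: Max_ge)

lemma longest_inc_attained:
  assumes "v < n"
  obtains p where "p \<in> inc_paths_from n c j v" "length p = longest_inc n c j v"
proof -
  have "length ` inc_paths_from n c j v \<noteq> {}" using singleton_in_inc_paths_from[OF assms] by blast
  then have "longest_inc n c j v \<in> length ` inc_paths_from n c j v"
    unfolding longest_inc_def using finite_inc_path_lengths by (rule Max_in[rotated])
  then show ?thesis using that by auto
qed

lemma longest_inc_ge_1: "v < n \<Longrightarrow> 1 \<le> longest_inc n c j v"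
  using length_le_longest_inc[OF singleton_in_inc_paths_from, of v n c j] by simp

lemma longest_inc_le_mp:
  assumes "v < n"
  shows "longest_inc n c j v \<le> mp n c j"
proof -
  obtain p where p: "p \<in> inc_paths_from n c j v" "length p = longest_inc n c j v"
    using longest_inc_attained[OF assms] .
  then have "dm_path n c j p" by (simp add: inc_paths_from_def inc_path_imp_dm_path)
  then show ?thesis using p(2) dm_path_length_le_mp by fastforce
qed

lemma longest_inc_decreasing:
  assumes "u < n" "v < n" "c u v = j" "deg_less n c j u v"
  shows "longest_inc n c j v < longest_inc n c j u"
proof -
  obtain p where p: "p \<in> inc_paths_from n c j v" "length p = longest_inc n c j v"
    using longest_inc_attained[OF assms(2)] .
  then have "inc_path n c j p" "hd p = v" by (simp_all add: inc_paths_from_def)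
  then have "u # p \<in> inc_paths_from n c j u"
    using inc_path_Cons[of n c j p u] assms unfolding inc_paths_from_def by simp
  then show ?thesis using p(2) length_le_longest_inc[of "u # p" n c j u] by simp
qed

lemma longest_inc_labels_inj:
  assumes col: "is_coloring n k c"
  shows "inj_on (\<lambda>v. \<lambda>j\<in>{..<k}. longest_inc n c j v) {..<n}"
proof (rule inj_onI, rule ccontr)
  fix u v assume u: "u \<in> {..<n}" and v: "v \<in> {..<n}" and "u \<noteq> v"
    and labels: "(\<lambda>j\<in>{..<k}. longest_inc n c j u) = (\<lambda>j\<in>{..<k}. longest_inc n c j v)"
  define j where "j = c u v"
  have "j < k" "c v u = j" using col u v \<open>u \<noteq> v\<close> unfolding is_coloring_def j_def by auto
  then have "longest_inc n c j u = longest_inc n c j v" using fun_cong[OF labels, of j] by simp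
  moreover have "deg_less n c j u v \<or> deg_less n c j v u"
    using \<open>u \<noteq> v\<close> unfolding deg_less_def by auto
  moreover have "longest_inc n c j v < longest_inc n c j u" if "deg_less n c j u v"
    using longest_inc_decreasing[of u n v c j] u v j_def that by simp
  moreover have "longest_inc n c j u < longest_inc n c j v" if "deg_less n c j v u"
    using longest_inc_decreasing[of v n u c j] u v \<open>c v u = j\<close> that by simp
  ultimately show False by auto
qed

lemma prod_list_map_conv_prod_nth: "prod_list (map f xs) = (\<Prod>j<length xs. f (xs ! j))"
  by (induction xs) (simp_all add: prod.lessThan_Suc_shift del: prod.lessThan_Suc)

lemma good_prod_list: "good ms (prod_list (map (\<lambda>x. x - 1) ms) + 1)"
  unfolding good_def
proof (intro allI impI, rule ccontr)
  fix n c
  assume n: "prod_list (map (\<lambda>x. x - 1) ms) + 1 \<le> n" and col: "is_coloring n (length ms) c"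
    and "\<not> (\<exists>j<length ms. ms ! j \<le> mp n c j)"
  then have short: "\<And>j. j < length ms \<Longrightarrow> mp n c j < ms ! j" by auto
  let ?label = "\<lambda>v. \<lambda>j\<in>{..<length ms}. longest_inc n c j v"
  let ?B = "PiE {..<length ms} (\<lambda>j. {1..ms ! j - 1})"
  have "?label v \<in> ?B" if v: "v < n" for v
  proof -
    have "longest_inc n c j v \<in> {1..ms ! j - 1}" if "j < length ms" for j
      using longest_inc_ge_1[OF v] longest_inc_le_mp[OF v, of c j] short[OF that] by simp
    then show ?thesis by auto
  qed
  then have "?label ` {..<n} \<subseteq> ?B" by (intro image_subsetI) simp
  then have "card {..<n} \<le> card ?B"
    using longest_inc_labels_inj[OF col] by (intro card_inj_on_le) (simp_all add: finite_PiE)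
  also have "card ?B = prod_list (map (\<lambda>x. x - 1) ms)"
    by (simp add: card_PiE prod_list_map_conv_prod_nth)
  finally show False using n by simp
qed

lemma Mnum_le_prod_list: "Mnum ms \<le> prod_list (map (\<lambda>x. x - 1) ms) + 1"
  unfolding Mnum_def using good_prod_list by (rule Least_le)

section \<open>The lower bound\<close>

text \<open>A list ss of block sizes splits {..<sum_list ss} into consecutive blocks; vertex v lies in
block number block ss v at position offset ss v.\<close>

fun block :: "nat list \<Rightarrow> nat \<Rightarrow> nat" where
  "block [] v = 0"
| "block (s # ss) v = (if v < s then 0 else Suc (block ss (v - s)))"

fun offset :: "nat list \<Rightarrow> nat \<Rightarrow> nat" where
  "offset [] v = v"
| "offset (s # ss) v = (if v < s then v else offset ss (v - s))"

lemma block_offset_less: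
  "v < sum_list ss \<Longrightarrow> block ss v < length ss \<and> offset ss v < ss ! block ss v"
  by (induction ss arbitrary: v) auto

lemma block_offset_inj:
  "\<lbrakk>u < sum_list ss; v < sum_list ss; block ss u = block ss v; offset ss u = offset ss v\<rbrakk>
   \<Longrightarrow> u = v"
proof (induction ss arbitrary: u v)
  case (Cons s ss)
  show ?case
  proof (cases "u < s \<or> v < s")
    case True
    then show ?thesis using Cons.prems by (auto split: if_splits)
  next
    case False
    have "u - s = v - s" by (rule Cons.IH) (use Cons.prems False in auto)
    then show ?thesis using False by arith
  qed
qed simp

lemma block_offset_surj:
  "\<lbrakk>p < length ss; l < ss ! p\<rbrakk> \<Longrightarrow> \<exists>v < sum_list ss. block ss v = p \<and> offset ss v = l"
proof (induction ss arbitrary: p)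
  case (Cons s ss)
  show ?case
  proof (cases p)
    case (Suc p')
    then obtain v where "v < sum_list ss" "block ss v = p'" "offset ss v = l"
      using Cons by auto
    then show ?thesis using Suc by (intro exI[of _ "s + v"]) auto
  qed (use Cons.prems in \<open>intro exI[of _ l], auto\<close>)
qed simp

lemma bij_betw_offset_block:
  assumes "p < length ss"
  shows "bij_betw (offset ss) {u. u < sum_list ss \<and> block ss u = p} {..<ss ! p}"
  unfolding bij_betw_def
proof
  show "inj_on (offset ss) {u. u < sum_list ss \<and> block ss u = p}"
  proof (rule inj_onI)
    fix x y assume "x \<in> {u. u < sum_list ss \<and> block ss u = p}"
      "y \<in> {u. u < sum_list ss \<and> block ss u = p}" "offset ss x = offset ss y"
    then show "x = y" by (intro block_offset_inj[of x ss y]) auto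
  qed
  show "offset ss ` {u. u < sum_list ss \<and> block ss u = p} = {..<ss ! p}"
  proof (intro equalityI subsetI)
    fix l assume "l \<in> offset ss ` {u. u < sum_list ss \<and> block ss u = p}"
    then obtain u where "u < sum_list ss" "block ss u = p" "l = offset ss u" by blast
    then show "l \<in> {..<ss ! p}" using block_offset_less[of u ss] by simp
  next
    fix l assume "l \<in> {..<ss ! p}"
    then obtain v where "v < sum_list ss" "block ss v = p" "offset ss v = l"
      using block_offset_surj[OF assms] by blast
    then show "l \<in> offset ss ` {u. u < sum_list ss \<and> block ss u = p}" by blast
  qed
qed

lemma card_block: "p < length ss \<Longrightarrow> card {u. u < sum_list ss \<and> block ss u = p} = ss ! p"
  using bij_betw_same_card[OF bij_betw_offset_block] by simp

definition mp_bounded_coloring :: "nat \<Rightarrow> nat \<Rightarrow> (nat \<Rightarrow> nat \<Rightarrow> nat) \<Rightarrow> nat \<Rightarrow> bool" where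
  "mp_bounded_coloring n k c a \<longleftrightarrow> is_coloring n k c \<and> (\<forall>j<k. mp n c j \<le> a)"

definition block_coloring ::
    "nat list \<Rightarrow> (nat \<Rightarrow> nat \<Rightarrow> nat \<Rightarrow> nat) \<Rightarrow> nat \<Rightarrow> nat \<Rightarrow> nat \<Rightarrow> nat" where
  "block_coloring ss col k u v =
     (if block ss u = block ss v then col (block ss u) (offset ss u) (offset ss v) else k)"

locale block_sum =
  fixes ss :: "nat list" and col :: "nat \<Rightarrow> nat \<Rightarrow> nat \<Rightarrow> nat" and k a :: nat
  assumes distinct_sizes: "distinct ss" and few_blocks: "length ss \<le> a"
    and bounded_blocks: "\<And>p. p < length ss \<Longrightarrow> mp_bounded_coloring (ss ! p) k (col p) a"
begin

abbreviation "N \<equiv> sum_list ss"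
abbreviation "C \<equiv> block_coloring ss col k"

lemma block_coloring_same_block:
  assumes "u < N" "v < N" "u \<noteq> v" "block ss u = block ss v"
  shows "C u v < k \<and> C u v = C v u"
proof -
  have "offset ss u \<noteq> offset ss v" using assms block_offset_inj by blast
  then show ?thesis
    using bounded_blocks[of "block ss v"] block_offset_less[OF assms(1)] block_offset_less[OF assms(2)]
      assms(4)
    unfolding block_coloring_def mp_bounded_coloring_def is_coloring_def by auto
qed

lemma block_coloring_eq_old_color:
  "j < k \<Longrightarrow> C v u = j \<longleftrightarrow> block ss u = block ss v \<and> col (block ss v) (offset ss v) (offset ss u) = j"
  unfolding block_coloring_def by auto

lemma is_coloring_block_coloring: "is_coloring N (Suc k) C"
  unfolding is_coloring_def
proof (intro allI impI)
  fix u v assume "u < N" "v < N" "u \<noteq> v"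
  then show "C u v < Suc k \<and> C u v = C v u"
    using block_coloring_same_block[of u v]
    by (cases "block ss u = block ss v") (auto simp: block_coloring_def)
qed

lemma cdeg_new_color: assumes v: "v < N" shows "cdeg N C k v = N - ss ! block ss v"
proof -
  let ?same = "{u. u < N \<and> block ss u = block ss v}"
  have "{u. u < N \<and> u \<noteq> v \<and> C v u = k} = {..<N} - ?same"
  proof (intro set_eqI iffI)
    fix u assume "u \<in> {u. u < N \<and> u \<noteq> v \<and> C v u = k}"
    then show "u \<in> {..<N} - ?same" using block_coloring_same_block[of v u] v by auto
  qed (auto simp: block_coloring_def)
  then have "cdeg N C k v = N - card ?same"
    unfolding cdeg_def by (simp add: card_Diff_subset[of ?same] subset_eq)
  then show ?thesis using card_block block_offset_less[OF v] by simp
qed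

lemma cdeg_old_color:
  assumes v: "v < N" and j: "j < k"
  shows "cdeg N C j v = cdeg (ss ! block ss v) (col (block ss v)) j (offset ss v)"
proof -
  let ?P = "block ss v"
  let ?S = "{u. u < N \<and> block ss u = ?P}"
  let ?A = "{u. u < N \<and> u \<noteq> v \<and> C v u = j}"
  let ?B = "{l. l < ss ! ?P \<and> l \<noteq> offset ss v \<and> col ?P (offset ss v) l = j}"
  have bij: "bij_betw (offset ss) ?S {..<ss ! ?P}"
    using bij_betw_offset_block[of ?P ss] block_offset_less[OF v] by simp
  have A: "?A = {u \<in> ?S. u \<noteq> v \<and> col ?P (offset ss v) (offset ss u) = j}"
    using block_coloring_eq_old_color[OF j] by blast
  have image: "offset ss ` ?A = ?B"
  proof (intro set_eqI iffI)
    fix l assume "l \<in> offset ss ` ?A"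
    then obtain u where u: "u \<in> ?S" "u \<noteq> v" "col ?P (offset ss v) (offset ss u) = j"
      "l = offset ss u" unfolding A by blast
    then show "l \<in> ?B" using block_offset_less[of u ss] block_offset_inj[of u ss v] v by auto
  next
    fix l assume l: "l \<in> ?B"
    then have "l \<in> offset ss ` ?S" using bij_betw_imp_surj_on[OF bij] by auto
    then obtain u where "u \<in> ?S" "offset ss u = l" by blast
    then show "l \<in> offset ss ` ?A" using l unfolding A by auto
  qed
  have "inj_on (offset ss) ?A"
    using bij_betw_imp_inj_on[OF bij] by (rule inj_on_subset) (auto simp: A)
  from card_image[OF this] have "card ?B = card ?A" unfolding image .
  then show ?thesis unfolding cdeg_def by simp
qed

lemma dm_path_old_color_same_block:
  assumes j: "j < k" and dp: "dm_path N C j p" and i: "i < length p"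
  shows "block ss (p ! i) = block ss (hd p)"
  using i
proof (induction i)
  case 0
  then show ?case by (simp add: hd_conv_nth)
next
  case (Suc i)
  then have "C (p ! i) (p ! Suc i) = j" using dp unfolding dm_path_def by simp
  then show ?case using Suc block_coloring_eq_old_color[OF j] by simp
qed

lemma dm_path_old_color_offset:
  assumes j: "j < k" and dp: "dm_path N C j p"
  defines "P \<equiv> block ss (hd p)"
  shows "dm_path (ss ! P) (col P) j (map (offset ss) p)"
  unfolding dm_path_def
proof (intro conjI allI impI)
  have inN: "\<And>i. i < length p \<Longrightarrow> p ! i < N" using dp by (rule dm_path_nth_less)
  have in_P: "\<And>i. i < length p \<Longrightarrow> block ss (p ! i) = P"
    unfolding P_def using dm_path_old_color_same_block[OF j dp] .
  have "inj_on (offset ss) (set p)"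
  proof (rule inj_onI)
    fix x y assume "x \<in> set p" "y \<in> set p" "offset ss x = offset ss y"
    then obtain i i' where "i < length p" "i' < length p" "x = p ! i" "y = p ! i'"
      "offset ss (p ! i) = offset ss (p ! i')" by (auto simp: in_set_conv_nth)
    then show "x = y" using block_offset_inj[OF inN inN] in_P by simp
  qed
  then show "distinct (map (offset ss) p)" using dp unfolding dm_path_def by (simp add: distinct_map)
  show "set (map (offset ss) p) \<subseteq> {..<ss ! P}"
  proof
    fix l assume "l \<in> set (map (offset ss) p)"
    then obtain i where i: "i < length p" "l = offset ss (p ! i)" by (auto simp: in_set_conv_nth)
    then show "l \<in> {..<ss ! P}" using block_offset_less[OF inN[OF i(1)]] in_P[OF i(1)] by simp
  qed
  fix i assume "Suc i < length (map (offset ss) p)"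
  then have i: "i < length p" "Suc i < length p" by simp_all
  have "C (p ! i) (p ! Suc i) = j" "cdeg N C j (p ! i) \<le> cdeg N C j (p ! Suc i)"
    using dp i unfolding dm_path_def by simp_all
  then show "col P (map (offset ss) p ! i) (map (offset ss) p ! Suc i) = j"
    and "cdeg (ss ! P) (col P) j (map (offset ss) p ! i)
         \<le> cdeg (ss ! P) (col P) j (map (offset ss) p ! Suc i)"
    using cdeg_old_color[OF inN[OF i(1)] j] cdeg_old_color[OF inN[OF i(2)] j]
      in_P[OF i(1)] in_P[OF i(2)] i by (simp_all add: block_coloring_def)
qed

lemma dm_path_old_color_length:
  assumes j: "j < k" and dp: "dm_path N C j p"
  shows "length p \<le> a"
proof (cases "p = []")
  case False
  then have "block ss (hd p) < length ss"
    using block_offset_less dm_path_nth_less[OF dp, of 0] by (simp add: hd_conv_nth)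
  then have "mp (ss ! block ss (hd p)) (col (block ss (hd p))) j \<le> a"
    using bounded_blocks j unfolding mp_bounded_coloring_def by blast
  then show ?thesis
    using dm_path_length_le_mp[OF dm_path_old_color_offset[OF j dp]] by simp
qed simp

lemma dm_path_new_color_sizes_decrease:
  assumes dp: "dm_path N C k p" and i: "Suc i < length p"
  shows "ss ! block ss (p ! Suc i) < ss ! block ss (p ! i)"
proof -
  have i': "i < length p" using i by simp
  have inN: "p ! i < N" "p ! Suc i < N" using dm_path_nth_less[OF dp] i i' by auto
  note bounds = block_offset_less[OF inN(1)] block_offset_less[OF inN(2)]
  have "p ! i \<noteq> p ! Suc i" using dp i unfolding dm_path_def by (simp add: nth_eq_iff_index_eq)
  moreover have "C (p ! i) (p ! Suc i) = k" using dp i unfolding dm_path_def by auto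
  ultimately have "block ss (p ! i) \<noteq> block ss (p ! Suc i)"
    using block_coloring_same_block[OF inN] by auto
  then have "ss ! block ss (p ! i) \<noteq> ss ! block ss (p ! Suc i)"
    using nth_eq_iff_index_eq[OF distinct_sizes] bounds by simp
  moreover have "cdeg N C k (p ! i) \<le> cdeg N C k (p ! Suc i)"
    using dp i unfolding dm_path_def by auto
  then have "N - ss ! block ss (p ! i) \<le> N - ss ! block ss (p ! Suc i)"
    using cdeg_new_color inN by simp
  moreover have "ss ! block ss (p ! i) \<le> N" "ss ! block ss (p ! Suc i) \<le> N"
    using bounds elem_le_sum_list by auto
  ultimately show ?thesis by linarith
qed

lemma dm_path_new_color_length:
  assumes dp: "dm_path N C k p"
  shows "length p \<le> a"
proof -
  define part_size where "part_size v = ss ! block ss v" for v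
  have "transp (\<lambda>x y :: nat. y < x)" unfolding transp_def by auto
  then have "sorted_wrt (\<lambda>x y. y < x) (map part_size p)"
    using dm_path_new_color_sizes_decrease[OF dp]
    by (simp add: sorted_wrt_iff_nth_Suc_transp part_size_def)
  then have "distinct (map part_size p)" by (rule sorted_wrt_irrefl_imp_distinct) simp
  then have "length p = card (set (map part_size p))" using distinct_card by fastforce
  also have "\<dots> \<le> card (set ss)"
  proof (rule card_mono)
    show "set (map part_size p) \<subseteq> set ss"
    proof
      fix s assume "s \<in> set (map part_size p)"
      then obtain i where i: "i < length p" "s = part_size (p ! i)" by (auto simp: in_set_conv_nth)
      then show "s \<in> set ss"
        using block_offset_less[OF dm_path_nth_less[OF dp i(1)]] unfolding part_size_def by simp
    qed
  qed simp
  also have "\<dots> \<le> a" using card_length few_blocks le_trans by blast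
  finally show ?thesis .
qed

lemma mp_bounded_block_coloring: "mp_bounded_coloring N (Suc k) C a"
  unfolding mp_bounded_coloring_def
  using is_coloring_block_coloring dm_path_old_color_length dm_path_new_color_length
  by (auto intro: mp_leI simp: less_Suc_eq)

end

lemma distinct_parts_decomposition:
  "2 * n + a * (a - 1) \<le> 2 * a * N \<Longrightarrow>
   \<exists>ss. distinct ss \<and> length ss \<le> a \<and> sum_list ss = n \<and> (\<forall>s\<in>set ss. s \<le> N)"
proof (induction a arbitrary: n N)
  case 0
  then show ?case by (intro exI[of _ "[]"]) auto
next
  case (Suc a)
  show ?case
  proof (cases "n \<le> N")
    case True
    then show ?thesis by (intro exI[of _ "[n]"]) auto
  next
    case False
    obtain N' where N': "N = Suc N'" using False Suc.prems by (cases N) auto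
    have "2 * (n - N) + a * (a - 1) \<le> 2 * a * N'"
      using Suc.prems False unfolding N' by (cases a) (auto simp: algebra_simps)
    then obtain ss where "distinct ss" "length ss \<le> a" "sum_list ss = n - N" "\<forall>s\<in>set ss. s \<le> N'"
      using Suc.IH by blast
    then show ?thesis using False N' by (intro exI[of _ "N # ss"]) auto
  qed
qed

lemma exists_mp_bounded_coloring:
  assumes "1 \<le> a" "1 \<le> k" "2 * n \<le> a ^ k + a"
  shows "\<exists>c. mp_bounded_coloring n k c a"
  using assms(2,3)
proof (induction k arbitrary: n rule: nat_induct_at_least)
  case base
  have "mp n (\<lambda>u v. 0) 0 \<le> n" by (rule mp_leI) (rule dm_path_length_le)
  then have "mp_bounded_coloring n 1 (\<lambda>u v. 0) a"
    using base unfolding mp_bounded_coloring_def is_coloring_def by auto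
  then show ?case by blast
next
  case (Suc k)
  define N where "N = (a ^ k + a) div 2"
  have "even (a ^ k + a)" using Suc.hyps by simp
  then have N2: "2 * N = a ^ k + a" unfolding N_def by simp
  then have "2 * a * N = a ^ Suc k + a * (a - 1) + a" using assms(1)
    by (cases a) (simp_all add: algebra_simps)
  then have "2 * n + a * (a - 1) \<le> 2 * a * N" using Suc.prems by linarith
  then obtain ss where ss: "distinct ss" "length ss \<le> a" "sum_list ss = n" "\<forall>s\<in>set ss. s \<le> N"
    using distinct_parts_decomposition by blast
  have "\<exists>c. mp_bounded_coloring (ss ! p) k c a" if "p < length ss" for p
    using Suc.IH ss(4) that N2 by (metis mult_le_mono2 nth_mem)
  then obtain col where "\<And>p. p < length ss \<Longrightarrow> mp_bounded_coloring (ss ! p) k (col p) a"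
    by metis
  then have "block_sum ss col k a" using ss by unfold_locales
  then show ?case using block_sum.mp_bounded_block_coloring ss(3) by blast
qed

lemma less_Mnum:
  assumes "good ms M" "is_coloring n (length ms) c" "\<And>j. j < length ms \<Longrightarrow> mp n c j < ms ! j"
  shows "n < Mnum ms"
proof (rule ccontr)
  assume "\<not> n < Mnum ms"
  moreover have "good ms (Mnum ms)" unfolding Mnum_def using assms(1) by (rule LeastI)
  ultimately show False using assms(2,3) unfolding good_def by (meson not_le not_less)
qed

theorem theorem1p2:
  fixes k m :: nat
  assumes "k \<ge> 2" and "m \<ge> 3"
  shows "(\<exists>M. good (replicate k m) M) \<and>
         real ((m - 1) ^ k) / 2 + (real m - 1) / 2 + 1 \<le> real (Mk k m) \<and>
         Mk k m \<le> (m - 1) ^ k + 1 \<and>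
         (\<forall>ms :: nat list. ms \<noteq> [] \<and> (\<forall>x\<in>set ms. x > 0) \<longrightarrow>
            (\<exists>M. good ms M) \<and> Mnum ms \<le> prod_list (map (\<lambda>x. x - 1) ms) + 1)"
proof -
  define a where "a = m - 1"
  define n where "n = (a ^ k + a) div 2"
  have n2: "2 * n = a ^ k + a" using assms unfolding n_def a_def by simp
  have "1 \<le> a" "1 \<le> k" using assms by (simp_all add: a_def)
  then obtain c where "mp_bounded_coloring n k c a"
    using exists_mp_bounded_coloring n2 by (metis order_refl)
  then have "n < Mk k m"
    unfolding Mk_def using good_prod_list assms
    by (intro less_Mnum[where c = c]) (auto simp: mp_bounded_coloring_def a_def)
  then have "real n + 1 \<le> real (Mk k m)" by simp
  moreover have "real ((m - 1) ^ k) / 2 + (real m - 1) / 2 = real n"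
  proof -
    have "real m - 1 = real a" using assms by (simp add: a_def)
    moreover have "2 * real n = real (a ^ k) + real a" using arg_cong[OF n2, of real] by simp
    ultimately show ?thesis unfolding a_def[symmetric] by (simp add: field_simps)
  qed
  moreover have "Mk k m \<le> (m - 1) ^ k + 1"
    using Mnum_le_prod_list[of "replicate k m"] unfolding Mk_def by (simp add: prod_list_replicate)
  ultimately show ?thesis using good_prod_list Mnum_le_prod_list by auto
qed

end
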